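(* Let $G=(V,E)$ be a simple undirected connected graph modeling a radio network, and let $F$ be a finite set of tours in $G$, each of which consists of a single link (i.e., each packet must be forwarded exactly once, from the tail to the head of its link), with all packets available at their source nodes from the start. Then the minimum number of rounds of a transmission schedule that delivers every packet of $F$ to its destination equals the chromatic number of the conflict graph of $F$.
   Context: Radio network model: a network is a simple undirected connected graph $G=(V,E)$; an oriented edge $(u,v)$ is a link $u\rightarrow v$ with tail $u$ and head $v$. Computation proceeds in synchronous rounds; in each round each node either transmits a message or listens. A node $v$ hears a message from its neighbor $u$ in round $t$ iff $v$ listens in round $t$ and $u$ is the only neighbor of $v$ transmitting in round $t$. A tour consists of a packet, its injection round, and a simple oriented path $\langle v_1,\dots,v_k\rangle$ it must traverse; its links are $v_i\rightarrow v_{i+1}$, its source is $v_1$ and its destination is $v_k$. The packet is routed along the tour when there are rounds $t_1<\dots<t_{k-1}$ (not earlier than the injection round) such that $v_i$ transmits the packet in round $t_i$ and $v_{i+1}$ hears it in round $t_i$. Conflicts: a node $w$ conflicts with a link $u\rightarrow v$ if $w=u$, or $w=v$, or $w$ and $v$ are neighbors; a node conflicts with a tour if it conflicts with some link of the tour. Two tours $f_0,f_1$ conflict if either they pass through a common node, or some node of one tour $f_i$ other than $f_i$'s destination conflicts with the other tour $f_{1-i}$. The conflict graph of a set $F$ of tours is the simple graph whose vertices are the tours in $F$, two distinct tours being adjacent iff they conflict. The chromatic number of a graph is the minimum number of colors in a proper vertex coloring. *)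

theory Defs
  imports Main
begin

definition simple_graph :: "'v set \<Rightarrow> ('v \<Rightarrow> 'v \<Rightarrow> bool) \<Rightarrow> bool" where
  "simple_graph V E \<longleftrightarrow> finite V \<and> (\<forall>u v. E u v \<longrightarrow> u \<in> V \<and> v \<in> V)
     \<and> (\<forall>u v. E u v \<longrightarrow> E v u) \<and> (\<forall>u. \<not> E u u)"

definition connected_graph :: "'v set \<Rightarrow> ('v \<Rightarrow> 'v \<Rightarrow> bool) \<Rightarrow> bool" where
  "connected_graph V E \<longleftrightarrow> V \<noteq> {} \<and> (\<forall>u\<in>V. \<forall>v\<in>V. E\<^sup>*\<^sup>* u v)"

text \<open>A schedule assigns to each round t and node v either None (v listens)
or Some p (v transmits packet p).\<close>

type_synonym ('v,'p) schedule = "nat \<Rightarrow> 'v \<Rightarrow> 'p option"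

definition hears :: "('v \<Rightarrow> 'v \<Rightarrow> bool) \<Rightarrow> ('v,'p) schedule \<Rightarrow> nat \<Rightarrow> 'v \<Rightarrow> 'v \<Rightarrow> bool" where
  "hears E s t u v \<longleftrightarrow> E u v \<and> s t v = None \<and> s t u \<noteq> None
     \<and> (\<forall>w. E w v \<and> s t w \<noteq> None \<longrightarrow> w = u)"

definition routes_all ::
  "('v \<Rightarrow> 'v \<Rightarrow> bool) \<Rightarrow> ('p \<Rightarrow> 'v) \<Rightarrow> ('p \<Rightarrow> 'v) \<Rightarrow> 'p set \<Rightarrow> ('v,'p) schedule \<Rightarrow> nat \<Rightarrow> bool" where
  "routes_all E src dst F s T \<longleftrightarrow>
     (\<forall>p\<in>F. \<exists>t<T. s t (src p) = Some p \<and> hears E s t (src p) (dst p))"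

definition min_schedule_length ::
  "('v \<Rightarrow> 'v \<Rightarrow> bool) \<Rightarrow> ('p \<Rightarrow> 'v) \<Rightarrow> ('p \<Rightarrow> 'v) \<Rightarrow> 'p set \<Rightarrow> nat" where
  "min_schedule_length E src dst F = (LEAST T. \<exists>s. routes_all E src dst F s T)"

definition node_conflicts_link :: "('v \<Rightarrow> 'v \<Rightarrow> bool) \<Rightarrow> 'v \<Rightarrow> 'v \<Rightarrow> 'v \<Rightarrow> bool" where
  "node_conflicts_link E w u v \<longleftrightarrow> w = u \<or> w = v \<or> E w v"

text \<open>Conflict of two single-link tours p, q. The nodes of tour p are src p, dst p;
the only node other than the destination is src p.\<close>
definition tours_conflict ::
  "('v \<Rightarrow> 'v \<Rightarrow> bool) \<Rightarrow> ('p \<Rightarrow> 'v) \<Rightarrow> ('p \<Rightarrow> 'v) \<Rightarrow> 'p \<Rightarrow> 'p \<Rightarrow> bool" where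
  "tours_conflict E src dst p q \<longleftrightarrow>
     {src p, dst p} \<inter> {src q, dst q} \<noteq> {}
     \<or> node_conflicts_link E (src p) (src q) (dst q)
     \<or> node_conflicts_link E (src q) (src p) (dst p)"

definition chromatic_number :: "'a set \<Rightarrow> ('a \<Rightarrow> 'a \<Rightarrow> bool) \<Rightarrow> nat" where
  "chromatic_number S adj = (LEAST k. \<exists>c :: 'a \<Rightarrow> nat.
      (\<forall>x\<in>S. c x < k) \<and> (\<forall>x\<in>S. \<forall>y\<in>S. x \<noteq> y \<and> adj x y \<longrightarrow> c x \<noteq> c y))"

end

theory Submission
  imports Defs
begin

text \<open>Colour each tour by the round in which its packet is delivered. Two tours delivered
in the same round cannot conflict, since a receiver that transmits, or that hears a second
neighbour, receives nothing; so a schedule of \<open>T\<close> rounds is a proper \<open>T\<close>-colouring of the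
conflict graph. Conversely, letting the tours of colour \<open>t\<close> transmit in round \<open>t\<close> delivers
every packet, because all transmitters of a round are sources of pairwise non-conflicting
tours.\<close>

definition proper_coloring :: "'a set \<Rightarrow> ('a \<Rightarrow> 'a \<Rightarrow> bool) \<Rightarrow> ('a \<Rightarrow> nat) \<Rightarrow> nat \<Rightarrow> bool" where
  "proper_coloring S adj c k \<longleftrightarrow>
     (\<forall>x\<in>S. c x < k) \<and> (\<forall>x\<in>S. \<forall>y\<in>S. x \<noteq> y \<and> adj x y \<longrightarrow> c x \<noteq> c y)"

lemma chromatic_number_eq_Least_proper_coloring:
  "chromatic_number S adj = (LEAST k. \<exists>c. proper_coloring S adj c k)"
  by (simp add: chromatic_number_def proper_coloring_def)

lemma simultaneous_deliveries_not_conflict: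
  assumes p: "s t (src p) = Some p" "hears E s t (src p) (dst p)"
    and q: "s t (src q) = Some q" "hears E s t (src q) (dst q)"
    and "p \<noteq> q"
  shows "\<not> tours_conflict E src dst p q"
proof -
  have srcs: "src p \<noteq> src q" using p(1) q(1) \<open>p \<noteq> q\<close> by auto
  have silent: "s t (dst p) = None" "s t (dst q) = None"
    using p(2) q(2) unfolding hears_def by blast+
  have "dst p \<noteq> src q" "dst q \<noteq> src p" using silent p(1) q(1) by auto
  moreover have "\<not> E (src q) (dst p)" using p(2) q(1) srcs unfolding hears_def by auto
  moreover have "\<not> E (src p) (dst q)" using q(2) p(1) srcs unfolding hears_def by auto
  moreover have "E (src q) (dst q)" using q(2) unfolding hears_def by blast
  ultimately show ?thesis using srcs
    unfolding tours_conflict_def node_conflicts_link_def by auto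
qed

lemma routes_all_imp_proper_coloring:
  assumes "routes_all E src dst F s T"
  shows "\<exists>c. proper_coloring F (tours_conflict E src dst) c T"
proof -
  have "\<forall>p\<in>F. \<exists>t. t < T \<and> s t (src p) = Some p \<and> hears E s t (src p) (dst p)"
    using assms unfolding routes_all_def by blast
  from bchoice[OF this] obtain c
    where c: "\<forall>p\<in>F. c p < T \<and> s (c p) (src p) = Some p \<and> hears E s (c p) (src p) (dst p)"
    by blast
  have "c p \<noteq> c q" if "p \<in> F" "q \<in> F" "p \<noteq> q" "tours_conflict E src dst p q" for p q
  proof
    assume "c p = c q"
    have "s (c p) (src p) = Some p" "hears E s (c p) (src p) (dst p)"
      using c \<open>p \<in> F\<close> by auto
    moreover have "s (c p) (src q) = Some q" "hears E s (c p) (src q) (dst q)"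
      using c \<open>q \<in> F\<close> \<open>c p = c q\<close> by auto
    ultimately have "\<not> tours_conflict E src dst p q"
      using \<open>p \<noteq> q\<close> by (rule simultaneous_deliveries_not_conflict)
    then show False using \<open>tours_conflict E src dst p q\<close> ..
  qed
  then show ?thesis using c unfolding proper_coloring_def by blast
qed

text \<open>For a proper colouring the \<open>SOME\<close> below picks a unique tour, since tours with a
common source conflict.\<close>

definition color_schedule :: "'p set \<Rightarrow> ('p \<Rightarrow> 'v) \<Rightarrow> ('p \<Rightarrow> nat) \<Rightarrow> ('v, 'p) schedule" where
  "color_schedule F src c t v =
     (if \<exists>p\<in>F. c p = t \<and> src p = v then Some (SOME p. p \<in> F \<and> c p = t \<and> src p = v) else None)"

lemma color_schedule_transmitter:
  assumes "color_schedule F src c t w \<noteq> None"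
  obtains q where "q \<in> F" "c q = t" "src q = w"
  using assms unfolding color_schedule_def by (auto split: if_splits)

lemma color_schedule_source:
  assumes col: "proper_coloring F (tours_conflict E src dst) c k" and "p \<in> F"
  shows "color_schedule F src c (c p) (src p) = Some p"
proof -
  have unique: "q = p" if "q \<in> F" "c q = c p" "src q = src p" for q
  proof (rule ccontr)
    assume "q \<noteq> p"
    moreover have "tours_conflict E src dst q p" using that unfolding tours_conflict_def by auto
    ultimately show False using col that \<open>p \<in> F\<close> unfolding proper_coloring_def by metis
  qed
  have "\<exists>q. q \<in> F \<and> c q = c p \<and> src q = src p" using \<open>p \<in> F\<close> by blast
  from someI_ex[OF this] have "(SOME q. q \<in> F \<and> c q = c p \<and> src q = src p) = p"
    using unique by blast
  then show ?thesis using \<open>p \<in> F\<close> unfolding color_schedule_def by auto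
qed

lemma color_schedule_delivers:
  assumes irrefl: "\<forall>u. \<not> E u u" and link: "E (src p) (dst p)"
    and col: "proper_coloring F (tours_conflict E src dst) c k" and "p \<in> F"
  shows "hears E (color_schedule F src c) (c p) (src p) (dst p)"
proof -
  let ?s = "color_schedule F src c"
  have same_color: "\<not> tours_conflict E src dst p q" if "q \<in> F" "c q = c p" "q \<noteq> p" for q
  proof
    assume "tours_conflict E src dst p q"
    with col \<open>q \<in> F\<close> \<open>q \<noteq> p\<close> \<open>p \<in> F\<close> have "c p \<noteq> c q"
      unfolding proper_coloring_def by auto
    with \<open>c q = c p\<close> show False by simp
  qed
  have receiver_silent: "?s (c p) (dst p) = None"
  proof (rule ccontr)
    assume "?s (c p) (dst p) \<noteq> None"
    then obtain q where q: "q \<in> F" "c q = c p" "src q = dst p"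
      by (rule color_schedule_transmitter)
    have "q \<noteq> p" using q(3) link irrefl by metis
    then show False using same_color[OF q(1,2)] q(3) unfolding tours_conflict_def by auto
  qed
  have only_sender: "w = src p" if neighbour: "E w (dst p)" and "?s (c p) w \<noteq> None" for w
  proof -
    obtain q where q: "q \<in> F" "c q = c p" "src q = w"
      using \<open>?s (c p) w \<noteq> None\<close> by (rule color_schedule_transmitter)
    show ?thesis
      using same_color[OF q(1,2)] q(3) neighbour
      unfolding tours_conflict_def node_conflicts_link_def by auto
  qed
  have "?s (c p) (src p) = Some p" using col \<open>p \<in> F\<close> by (rule color_schedule_source)
  then show ?thesis
    using link receiver_silent only_sender unfolding hears_def by blast
qed

lemma proper_coloring_imp_routes_all:
  assumes irrefl: "\<forall>u. \<not> E u u" and links: "\<forall>p\<in>F. E (src p) (dst p)"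
    and col: "proper_coloring F (tours_conflict E src dst) c k"
  shows "routes_all E src dst F (color_schedule F src c) k"
  unfolding routes_all_def
proof
  fix p assume "p \<in> F"
  then show "\<exists>t<k. color_schedule F src c t (src p) = Some p
      \<and> hears E (color_schedule F src c) t (src p) (dst p)"
    using col links color_schedule_source[OF col] color_schedule_delivers[OF irrefl _ col]
    unfolding proper_coloring_def by blast
qed

theorem theorem1:
  fixes V :: "'v set" and E :: "'v \<Rightarrow> 'v \<Rightarrow> bool"
    and F :: "'p set" and src dst :: "'p \<Rightarrow> 'v"
  assumes "simple_graph V E" and "connected_graph V E"
    and "finite F"
    and "\<forall>p\<in>F. E (src p) (dst p)"
  shows "min_schedule_length E src dst F = chromatic_number F (tours_conflict E src dst)"
proof -
  have irrefl: "\<forall>u. \<not> E u u" using assms(1) unfolding simple_graph_def by blast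
  have "(\<exists>s. routes_all E src dst F s T) \<longleftrightarrow> (\<exists>c. proper_coloring F (tours_conflict E src dst) c T)"
    for T
    using routes_all_imp_proper_coloring
      proper_coloring_imp_routes_all[of E F src dst, OF irrefl assms(4)]
    by blast
  then show ?thesis
    unfolding min_schedule_length_def chromatic_number_eq_Least_proper_coloring by simp
qed

end
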